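(* Let $\beta=(\beta_n)_{n\ge0}$ be a sequence of positive numbers with $\liminf_n\beta_n^{1/n}\ge1$. Then $\mathcal M(H^2(\beta))=H^\infty$ with equivalent norms (i.e. the two sets coincide and there is $C>0$ with $\|h\|_\infty\le\|M_h\|\le C\|h\|_\infty$ for all $h\in H^\infty$) if and only if $\beta$ is essentially decreasing.
   Context: $H^2(\beta)$ is the Hilbert space of analytic functions $f(z)=\sum_{n\ge0}a_nz^n$ on the unit disk $\mathbb D$ with $\|f\|^2=\sum_{n\ge0}|a_n|^2\beta_n<\infty$. $\mathcal M(H^2(\beta))$ is the space of analytic $h$ on $\mathbb D$ with $hf\in H^2(\beta)$ for all $f\in H^2(\beta)$, normed by the operator norm of the multiplication operator $M_hf=hf$; one always has $\|h\|_\infty\le\|M_h\|$. $H^\infty$ is the space of bounded analytic functions on $\mathbb D$ with the sup norm. $\beta$ is essentially decreasing if there is $C\ge1$ with $\beta_m\le C\beta_n$ for all $m\ge n\ge0$. *)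

theory Defs
  imports "HOL-Complex_Analysis.Complex_Analysis" "HOL-Library.Liminf_Limsup"
begin

definition tcoeff :: "(complex \<Rightarrow> complex) \<Rightarrow> nat \<Rightarrow> complex" where
  "tcoeff f n = (deriv ^^ n) f 0 / of_nat (fact n)"

definition H2 :: "(nat \<Rightarrow> real) \<Rightarrow> (complex \<Rightarrow> complex) set" where
  "H2 beta = {f. f holomorphic_on ball 0 1 \<and>
                 summable (\<lambda>n. (norm (tcoeff f n))\<^sup>2 * beta n)}"

definition H2_norm :: "(nat \<Rightarrow> real) \<Rightarrow> (complex \<Rightarrow> complex) \<Rightarrow> real" where
  "H2_norm beta f = sqrt (\<Sum>n. (norm (tcoeff f n))\<^sup>2 * beta n)"

definition multipliers :: "(nat \<Rightarrow> real) \<Rightarrow> (complex \<Rightarrow> complex) set" where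
  "multipliers beta = {h. h holomorphic_on ball 0 1 \<and>
                          (\<forall>f\<in>H2 beta. (\<lambda>z. h z * f z) \<in> H2 beta)}"

definition mult_norm :: "(nat \<Rightarrow> real) \<Rightarrow> (complex \<Rightarrow> complex) \<Rightarrow> real" where
  "mult_norm beta h = (SUP f\<in>{f\<in>H2 beta. H2_norm beta f \<le> 1}. H2_norm beta (\<lambda>z. h z * f z))"

definition Hinf :: "(complex \<Rightarrow> complex) set" where
  "Hinf = {h. h holomorphic_on ball 0 1 \<and> bounded (h ` ball 0 1)}"

definition sup_norm :: "(complex \<Rightarrow> complex) \<Rightarrow> real" where
  "sup_norm h = (SUP z\<in>ball 0 1. norm (h z))"

definition ess_decreasing :: "(nat \<Rightarrow> real) \<Rightarrow> bool" where
  "ess_decreasing beta \<longleftrightarrow> (\<exists>C\<ge>1. \<forall>m n. n \<le> m \<longrightarrow> beta m \<le> C * beta n)"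

end

theory Submission
  imports Defs "HOL-Computational_Algebra.Polynomial"
begin

text \<open>
  Necessity: the monomial \<open>z\<^sup>k\<close> has supremum norm at most \<open>1\<close> and \<open>H\<^sup>2(\<beta>)\<close> norm
  \<open>sqrt \<beta>\<^sub>k\<close>, so \<open>\<parallel>z\<^sup>m\<^sup>-\<^sup>n z\<^sup>n\<parallel> \<le> C \<parallel>z\<^sup>n\<parallel>\<close> gives \<open>\<beta>\<^sub>m \<le> C\<^sup>2 \<beta>\<^sub>n\<close>.

  Sufficiency: if \<open>|h| \<le> S\<close> on the disc, the discrete Parseval identity on circles gives
  \<open>\<Sum>n\<le>k. |(h f)\<^sub>n|\<^sup>2 \<le> S\<^sup>2 \<Sum>n\<le>k. |f\<^sub>n|\<^sup>2\<close> for every \<open>k\<close>, and Abel summation against the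
  decreasing majorant \<open>sup\<^sub>m\<^sub>\<ge>\<^sub>n \<beta>\<^sub>m \<le> C \<beta>\<^sub>n\<close> turns this into \<open>\<parallel>h f\<parallel> \<le> sqrt C S \<parallel>f\<parallel>\<close>.
  The growth condition makes point evaluations bounded, \<open>|f(w)| \<le> \<parallel>f\<parallel> \<parallel>k\<^sub>w\<parallel>\<close>; applied to
  \<open>h\<^sup>n\<close>, followed by \<open>n\<close>-th roots, this gives \<open>\<parallel>h\<parallel>\<^sub>\<infinity> \<le> \<parallel>M\<^sub>h\<parallel>\<close>.  That every multiplier is
  bounded at all is shown without the closed graph theorem, by a gliding hump.
\<close>

section \<open>Taylor coefficients\<close>

lemma tcoeff_fps_expansion:
  assumes "f has_fps_expansion F"
  shows "tcoeff f n = F $ n"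
  using fps_nth_fps_expansion[OF assms, of n] by (simp add: tcoeff_def)

lemma has_fps_expansion_tcoeff:
  assumes "f holomorphic_on ball 0 1"
  shows "f has_fps_expansion Abs_fps (tcoeff f)"
proof -
  have "f has_fps_expansion fps_expansion f 0"
    using assms by (intro has_fps_expansion_fps_expansion) auto
  moreover have "fps_expansion f 0 = Abs_fps (tcoeff f)"
    unfolding fps_expansion_def by (rule arg_cong[where f = Abs_fps]) (simp add: fun_eq_iff tcoeff_def)
  ultimately show ?thesis by simp
qed

lemma tcoeff_sums:
  assumes "f holomorphic_on ball 0 1" "norm z < 1"
  shows "(\<lambda>n. tcoeff f n * z ^ n) sums f z"
  using holomorphic_power_series[OF assms(1), of z] assms(2) by (simp add: tcoeff_def)

lemma summable_norm_tcoeff_power: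
  assumes "f holomorphic_on ball 0 1" "norm z < 1"
  shows "summable (\<lambda>n. norm (tcoeff f n * z ^ n))"
proof -
  define x where "x = (1 + norm z) / 2"
  have x: "norm z < x" "x < 1" using assms(2) by (auto simp: x_def)
  have "summable (\<lambda>n. tcoeff f n * complex_of_real x ^ n)"
    using tcoeff_sums[OF assms(1), of "of_real x"] x norm_ge_zero[of z] by (auto simp: sums_iff)
  then show ?thesis
    by (rule powser_insidea) (use x in auto)
qed

lemma tcoeff_mult:
  assumes "h holomorphic_on ball 0 1" "f holomorphic_on ball 0 1"
  shows "tcoeff (\<lambda>z. h z * f z) n = (\<Sum>i\<le>n. tcoeff h i * tcoeff f (n - i))"
  using tcoeff_fps_expansion[OF has_fps_expansion_mult[OF
          has_fps_expansion_tcoeff[OF assms(1)] has_fps_expansion_tcoeff[OF assms(2)]]]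
  by (simp add: fps_mult_nth atLeast0AtMost)

lemma tcoeff_cmult:
  assumes "f holomorphic_on ball 0 1"
  shows "tcoeff (\<lambda>z. c * f z) n = c * tcoeff f n"
  using tcoeff_fps_expansion[OF has_fps_expansion_cmult_left[OF has_fps_expansion_tcoeff[OF assms]]]
  by simp

lemma tcoeff_power: "tcoeff (\<lambda>z. z ^ k) n = (if n = k then 1 else 0)"
  using tcoeff_fps_expansion[OF has_fps_expansion_fps_X_power] by simp

lemma tcoeff_zero: "tcoeff (\<lambda>z. 0) n = 0"
  using tcoeff_fps_expansion[OF has_fps_expansion_0] by simp

definition taylor_poly :: "(complex \<Rightarrow> complex) \<Rightarrow> nat \<Rightarrow> complex poly" where
  "taylor_poly f M = (\<Sum>i\<le>M. monom (tcoeff f i) i)"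

lemma coeff_taylor_poly: "coeff (taylor_poly f M) n = (if n \<le> M then tcoeff f n else 0)"
  unfolding taylor_poly_def coeff_sum by (simp add: sum.delta)

lemma degree_taylor_poly: "degree (taylor_poly f M) \<le> M"
  unfolding taylor_poly_def
  by (intro degree_sum_le) (auto intro: order.trans[OF degree_monom_le])

lemma poly_taylor_poly: "poly (taylor_poly f M) z = (\<Sum>i\<le>M. tcoeff f i * z ^ i)"
  unfolding taylor_poly_def poly_sum poly_monom ..

lemma coeff_taylor_poly_mult:
  assumes "h holomorphic_on ball 0 1" "f holomorphic_on ball 0 1" "n \<le> k" "k \<le> M"
  shows "coeff (taylor_poly h M * taylor_poly f k) n = tcoeff (\<lambda>z. h z * f z) n"
proof -
  have "coeff (taylor_poly h M * taylor_poly f k) n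
      = (\<Sum>i\<le>n. coeff (taylor_poly h M) i * coeff (taylor_poly f k) (n - i))"
    by (rule coeff_mult)
  also have "\<dots> = (\<Sum>i\<le>n. tcoeff h i * tcoeff f (n - i))"
    using assms(3,4) by (intro sum.cong refl) (auto simp: coeff_taylor_poly)
  finally show ?thesis by (simp add: tcoeff_mult[OF assms(1,2)])
qed


lemma H2_norm_nonneg:
  assumes "\<And>n. beta n \<ge> 0" "f \<in> H2 beta"
  shows "H2_norm beta f \<ge> 0"
  using assms unfolding H2_def H2_norm_def by (auto intro!: suminf_nonneg)

lemma H2_zero: "(\<lambda>z. 0) \<in> H2 beta"
  and H2_norm_zero: "H2_norm beta (\<lambda>z. 0) = 0"
  by (simp_all add: H2_def H2_norm_def tcoeff_zero)

lemma H2_power: "(\<lambda>z. z ^ k) \<in> H2 beta"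
  and H2_norm_power: "H2_norm beta (\<lambda>z. z ^ k) = sqrt (beta k)"
proof -
  have "(\<lambda>n. (norm (tcoeff (\<lambda>z. z ^ k) n))\<^sup>2 * beta n) = (\<lambda>n. if n = k then beta n else 0)"
    by (auto simp: tcoeff_power)
  then have "(\<lambda>n. (norm (tcoeff (\<lambda>z. z ^ k) n))\<^sup>2 * beta n) sums beta k"
    by (simp add: sums_single)
  then show "(\<lambda>z. z ^ k) \<in> H2 beta" "H2_norm beta (\<lambda>z. z ^ k) = sqrt (beta k)"
    by (auto simp: H2_def H2_norm_def sums_iff intro!: holomorphic_intros)
qed

lemma H2_cmult:
  assumes f: "f \<in> H2 beta"
  shows "(\<lambda>z. c * f z) \<in> H2 beta"
    and "H2_norm beta (\<lambda>z. c * f z) = norm c * H2_norm beta f"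
proof -
  have hol: "f holomorphic_on ball 0 1"
    and s: "summable (\<lambda>n. (norm (tcoeff f n))\<^sup>2 * beta n)"
    using f unfolding H2_def by auto
  have eq: "(norm (tcoeff (\<lambda>z. c * f z) n))\<^sup>2 * beta n
            = (norm c)\<^sup>2 * ((norm (tcoeff f n))\<^sup>2 * beta n)" for n
    by (simp add: tcoeff_cmult[OF hol] norm_mult power_mult_distrib)
  have "summable (\<lambda>n. (norm (tcoeff (\<lambda>z. c * f z) n))\<^sup>2 * beta n)"
    unfolding eq by (rule summable_mult[OF s])
  then show "(\<lambda>z. c * f z) \<in> H2 beta"
    unfolding H2_def using hol by (auto intro!: holomorphic_intros)
  show "H2_norm beta (\<lambda>z. c * f z) = norm c * H2_norm beta f"
    unfolding H2_norm_def eq suminf_mult[OF s] by (simp add: real_sqrt_mult)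
qed

lemma Hinf_power: "(\<lambda>z::complex. z ^ k) \<in> Hinf"
proof -
  have "norm (z ^ k) \<le> 1" if "norm z < 1" for z :: complex
    using that by (simp add: norm_power power_le_one)
  then have "bounded ((\<lambda>z::complex. z ^ k) ` ball 0 1)"
    unfolding bounded_iff by (intro exI[of _ 1]) auto
  then show ?thesis unfolding Hinf_def by (auto intro!: holomorphic_intros)
qed

lemma norm_le_sup_norm:
  assumes "h \<in> Hinf" "norm z < 1"
  shows "norm (h z) \<le> sup_norm h"
proof -
  have "bounded (h ` ball 0 1)" using assms unfolding Hinf_def by auto
  then have "bdd_above ((\<lambda>z. norm (h z)) ` ball 0 1)"
    by (auto simp: bounded_iff bdd_above_def)
  then show ?thesis unfolding sup_norm_def
    by (rule cSUP_upper[rotated]) (use assms in simp)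
qed

lemma sup_norm_nonneg: "h \<in> Hinf \<Longrightarrow> sup_norm h \<ge> 0"
  using norm_le_sup_norm[of h 0] by (auto intro: order.trans[OF norm_ge_zero])

lemma sup_norm_le:
  assumes "\<And>z. norm z < 1 \<Longrightarrow> norm (h z) \<le> B"
  shows "sup_norm h \<le> B"
  unfolding sup_norm_def by (rule cSUP_least) (use assms in auto)

lemma sup_norm_power_le: "sup_norm (\<lambda>z::complex. z ^ k) \<le> 1"
  by (rule sup_norm_le) (simp add: norm_power power_le_one)


section \<open>Necessity of essential decrease\<close>

lemma ess_decreasing_if_Hinf_multiplier_bound:
  assumes pos: "\<And>n. beta n > 0" and C: "C \<ge> 0"
    and bound: "\<And>h f. h \<in> Hinf \<Longrightarrow> f \<in> H2 beta \<Longrightarrow>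
                  H2_norm beta (\<lambda>z. h z * f z) \<le> C * sup_norm h * H2_norm beta f"
  shows "ess_decreasing beta"
  unfolding ess_decreasing_def
proof (intro exI[of _ "max 1 (C\<^sup>2)"] conjI allI impI)
  fix m n :: nat assume "n \<le> m"
  then have "(\<lambda>z::complex. z ^ (m - n) * z ^ n) = (\<lambda>z. z ^ m)"
    by (simp flip: power_add)
  then have "sqrt (beta m) \<le> C * sup_norm (\<lambda>z::complex. z ^ (m - n)) * sqrt (beta n)"
    using bound[OF Hinf_power H2_power, of "m - n" n] by (simp add: H2_norm_power)
  also have "\<dots> \<le> C * sqrt (beta n)"
    using C sup_norm_power_le[of "m - n"] pos[of n] by (intro mult_right_mono mult_left_le) auto
  also have "\<dots> = sqrt (C\<^sup>2 * beta n)"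
    using C by (simp add: real_sqrt_mult)
  finally have "beta m \<le> C\<^sup>2 * beta n" by simp
  also have "\<dots> \<le> max 1 (C\<^sup>2) * beta n"
    using pos[of n] by (intro mult_right_mono) auto
  finally show "beta m \<le> max 1 (C\<^sup>2) * beta n" .
qed simp


section \<open>Point evaluations\<close>

text \<open>The growth hypothesis on \<open>\<beta>\<close> is used only through this lemma.\<close>

lemma summable_power_div_weight:
  assumes pos: "\<And>n. beta n > 0"
    and lim: "liminf (\<lambda>n. ereal (root n (beta n))) \<ge> 1"
    and s: "0 \<le> s" "s < 1"
  shows "summable (\<lambda>n. s ^ n / beta n)"
proof -
  define t where "t = (s + 1) / 2"
  have t: "s < t" "t < 1" "0 < t" using s by (auto simp: t_def)
  have "ereal t < liminf (\<lambda>n. ereal (root n (beta n)))"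
    by (rule less_le_trans[OF _ lim]) (use t(2) in simp)
  then have "eventually (\<lambda>n. t < root n (beta n)) sequentially"
    by (auto dest: less_LiminfD)
  then have "eventually (\<lambda>n. norm (s ^ n / beta n) \<le> (s / t) ^ n) sequentially"
    using eventually_gt_at_top[of 0]
  proof eventually_elim
    case (elim n)
    have "t ^ n < root n (beta n) ^ n"
      using elim t(3) by (intro power_strict_mono) auto
    then have "t ^ n < beta n" using elim(2) pos[of n] by simp
    then have "s ^ n / beta n \<le> s ^ n / t ^ n"
      using s t(3) pos[of n] by (intro divide_left_mono) auto
    then show ?case using s pos[of n] by (simp add: power_divide)
  qed
  moreover have "summable (\<lambda>n. (s / t) ^ n)"
    using s t by (intro summable_geometric) auto
  ultimately show ?thesis by (rule summable_comparison_test_ev)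
qed

lemma
  fixes x y :: "nat \<Rightarrow> real"
  assumes "summable (\<lambda>n. (x n)\<^sup>2)" "summable (\<lambda>n. (y n)\<^sup>2)"
  shows summable_abs_mult_of_squares: "summable (\<lambda>n. \<bar>x n * y n\<bar>)"
    and suminf_abs_mult_le: "(\<Sum>n. \<bar>x n * y n\<bar>) \<le> sqrt (\<Sum>n. (x n)\<^sup>2) * sqrt (\<Sum>n. (y n)\<^sup>2)"
proof -
  have "\<bar>x n * y n\<bar> \<le> (x n)\<^sup>2 + (y n)\<^sup>2" for n
    using sum_squares_bound[of "\<bar>x n\<bar>" "\<bar>y n\<bar>"] abs_ge_zero[of "x n * y n"]
    unfolding abs_mult power2_abs by linarith
  then show sm: "summable (\<lambda>n. \<bar>x n * y n\<bar>)"
    by (intro summable_comparison_test[OF _ summable_add[OF assms]]) auto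
  show "(\<Sum>n. \<bar>x n * y n\<bar>) \<le> sqrt (\<Sum>n. (x n)\<^sup>2) * sqrt (\<Sum>n. (y n)\<^sup>2)"
  proof (rule suminf_le_const[OF sm])
    fix N
    have "(\<Sum>n<N. \<bar>x n\<bar> * \<bar>y n\<bar>)\<^sup>2 \<le> (\<Sum>n<N. \<bar>x n\<bar>\<^sup>2) * (\<Sum>n<N. \<bar>y n\<bar>\<^sup>2)"
      by (rule Cauchy_Schwarz_ineq_sum)
    also have "\<dots> \<le> (\<Sum>n. (x n)\<^sup>2) * (\<Sum>n. (y n)\<^sup>2)"
      by (intro mult_mono) (auto intro!: sum_nonneg suminf_nonneg sum_le_suminf assms)
    finally have "(\<Sum>n<N. \<bar>x n * y n\<bar>)\<^sup>2 \<le> (\<Sum>n. (x n)\<^sup>2) * (\<Sum>n. (y n)\<^sup>2)"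
      by (simp add: abs_mult)
    then show "(\<Sum>n<N. \<bar>x n * y n\<bar>) \<le> sqrt (\<Sum>n. (x n)\<^sup>2) * sqrt (\<Sum>n. (y n)\<^sup>2)"
      unfolding real_sqrt_mult[symmetric] by (rule real_le_rsqrt)
  qed
qed

text \<open>The \<open>H\<^sup>2(\<beta>)\<close> norm of the reproducing kernel \<open>k\<^sub>w(z) = \<Sum>\<^sub>n (cnj w * z)\<^sup>n / \<beta>\<^sub>n\<close>.\<close>

definition kernel_norm :: "(nat \<Rightarrow> real) \<Rightarrow> complex \<Rightarrow> real" where
  "kernel_norm beta w = sqrt (\<Sum>n. (norm w ^ 2) ^ n / beta n)"

lemma summable_kernel:
  assumes pos: "\<And>n. beta n > 0"
    and lim: "liminf (\<lambda>n. ereal (root n (beta n))) \<ge> 1"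
    and w: "norm w < 1"
  shows "summable (\<lambda>n. (norm w ^ 2) ^ n / beta n)"
  by (rule summable_power_div_weight[OF pos lim])
     (use w in \<open>auto simp: power_less_one_iff abs_square_less_1\<close>)

lemma
  assumes pos: "\<And>n. beta n > 0"
    and lim: "liminf (\<lambda>n. ereal (root n (beta n))) \<ge> 1"
    and w: "norm w < 1"
  shows kernel_norm_pos: "kernel_norm beta w > 0"
    and inverse_kernel_norm_le: "1 / kernel_norm beta w \<le> sqrt (beta 0)"
proof -
  have "(\<Sum>n\<in>{0}. (norm w ^ 2) ^ n / beta n) \<le> (\<Sum>n. (norm w ^ 2) ^ n / beta n)"
    by (intro sum_le_suminf[OF summable_kernel[OF pos lim w]]) (auto simp: less_imp_le[OF pos])
  then have "sqrt (1 / beta 0) \<le> kernel_norm beta w"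
    unfolding kernel_norm_def by (intro real_sqrt_le_mono) simp
  then have K: "1 / sqrt (beta 0) \<le> kernel_norm beta w"
    by (simp add: real_sqrt_divide)
  moreover have "0 < 1 / sqrt (beta 0)" using pos[of 0] by simp
  ultimately show K0: "kernel_norm beta w > 0" by linarith
  show "1 / kernel_norm beta w \<le> sqrt (beta 0)"
    using K K0 pos[of 0] by (simp add: field_simps)
qed

lemma
  assumes pos: "\<And>n. beta n > 0"
    and lim: "liminf (\<lambda>n. ereal (root n (beta n))) \<ge> 1"
    and c: "summable (\<lambda>n. (norm (c n))\<^sup>2 * beta n)"
    and w: "norm w < 1"
  shows summable_norm_coeff_power: "summable (\<lambda>n. norm (c n * w ^ n))"
    and suminf_norm_coeff_power_le:
      "(\<Sum>n. norm (c n * w ^ n)) \<le> sqrt (\<Sum>n. (norm (c n))\<^sup>2 * beta n) * kernel_norm beta w"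
proof -
  define x where "x n = norm (c n) * sqrt (beta n)" for n
  define y where "y n = norm w ^ n / sqrt (beta n)" for n
  have x2: "(x n)\<^sup>2 = (norm (c n))\<^sup>2 * beta n" for n
    using pos[of n] by (simp add: x_def power_mult_distrib)
  have y2: "(y n)\<^sup>2 = (norm w ^ 2) ^ n / beta n" for n
    using pos[of n] by (simp add: y_def power_divide flip: power_mult) (simp add: mult.commute)
  have xy: "\<bar>x n * y n\<bar> = norm (c n * w ^ n)" for n
    using pos[of n] by (simp add: x_def y_def norm_mult norm_power)
  have sx: "summable (\<lambda>n. (x n)\<^sup>2)" and sy: "summable (\<lambda>n. (y n)\<^sup>2)"
    unfolding x2 y2 using c summable_kernel[OF pos lim w] .
  show "summable (\<lambda>n. norm (c n * w ^ n))"
    using summable_abs_mult_of_squares[OF sx sy] unfolding xy .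
  show "(\<Sum>n. norm (c n * w ^ n)) \<le> sqrt (\<Sum>n. (norm (c n))\<^sup>2 * beta n) * kernel_norm beta w"
    using suminf_abs_mult_le[OF sx sy] unfolding xy x2 y2 kernel_norm_def .
qed

lemma H2_point_eval_le:
  assumes pos: "\<And>n. beta n > 0"
    and lim: "liminf (\<lambda>n. ereal (root n (beta n))) \<ge> 1"
    and g: "g \<in> H2 beta" and w: "norm w < 1"
  shows "norm (g w) \<le> H2_norm beta g * kernel_norm beta w"
proof -
  have hol: "g holomorphic_on ball 0 1"
    and c: "summable (\<lambda>n. (norm (tcoeff g n))\<^sup>2 * beta n)"
    using g unfolding H2_def by auto
  have "norm (g w) = norm (\<Sum>n. tcoeff g n * w ^ n)"
    using tcoeff_sums[OF hol w] by (simp add: sums_iff)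
  also have "\<dots> \<le> (\<Sum>n. norm (tcoeff g n * w ^ n))"
    by (rule summable_norm[OF summable_norm_coeff_power[OF pos lim c w]])
  also have "\<dots> \<le> H2_norm beta g * kernel_norm beta w"
    unfolding H2_norm_def by (rule suminf_norm_coeff_power_le[OF pos lim c w])
  finally show ?thesis .
qed

lemma eval_fps_in_H2:
  assumes pos: "\<And>n. beta n > 0"
    and lim: "liminf (\<lambda>n. ereal (root n (beta n))) \<ge> 1"
    and c: "summable (\<lambda>n. (norm (c n))\<^sup>2 * beta n)"
  shows "eval_fps (Abs_fps c) \<in> H2 beta"
proof -
  have R: "fps_conv_radius (Abs_fps c) \<ge> 1"
    unfolding fps_conv_radius_def
  proof (rule conv_radius_geI_ex')
    fix r :: real assume "0 < r" "ereal r < 1"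
    then show "summable (\<lambda>n. Abs_fps c $ n * of_real r ^ n)"
      using summable_norm_coeff_power[OF pos lim c, of "of_real r"]
      by (auto intro: summable_norm_cancel)
  qed
  then have "fps_conv_radius (Abs_fps c) > 0"
    by (rule less_le_trans[rotated]) simp
  then have tc: "tcoeff (eval_fps (Abs_fps c)) k = c k" for k
    using tcoeff_fps_expansion[OF eval_fps_has_fps_expansion] by simp
  have "ball (0::complex) 1 \<subseteq> eball 0 (fps_conv_radius (Abs_fps c))"
  proof
    fix z :: complex assume "z \<in> ball 0 1"
    then have "ereal (norm z) < 1" by simp
    then have "ereal (norm z) < fps_conv_radius (Abs_fps c)"
      using R by (rule less_le_trans)
    then show "z \<in> eball 0 (fps_conv_radius (Abs_fps c))" by (simp add: eball_def)
  qed
  then have "eval_fps (Abs_fps c) holomorphic_on ball 0 1"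
    by (rule holomorphic_on_eval_fps)
  then show "eval_fps (Abs_fps c) \<in> H2 beta"
    unfolding H2_def using c by (simp add: tc)
qed


section \<open>The multiplier norm dominates the supremum norm\<close>

lemma H2_norm_mult_le_mult_norm:
  assumes pos: "\<And>n. beta n > 0"
    and B: "\<And>f. f \<in> H2 beta \<Longrightarrow>
              (\<lambda>z. h z * f z) \<in> H2 beta \<and> H2_norm beta (\<lambda>z. h z * f z) \<le> B * H2_norm beta f"
    and g: "g \<in> H2 beta"
  shows "H2_norm beta (\<lambda>z. h z * g z) \<le> mult_norm beta h * H2_norm beta g"
proof -
  have nonneg: "H2_norm beta f \<ge> 0" if "f \<in> H2 beta" for f
    using pos that by (intro H2_norm_nonneg) (auto intro: less_imp_le)
  have "bdd_above ((\<lambda>f. H2_norm beta (\<lambda>z. h z * f z)) ` {f \<in> H2 beta. H2_norm beta f \<le> 1})"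
  proof (rule bdd_aboveI2)
    fix f assume f: "f \<in> {f \<in> H2 beta. H2_norm beta f \<le> 1}"
    then have "H2_norm beta (\<lambda>z. h z * f z) \<le> B * H2_norm beta f" using B by blast
    also have "\<dots> \<le> \<bar>B\<bar> * H2_norm beta f" using f nonneg[of f] by (intro mult_right_mono) auto
    also have "\<dots> \<le> \<bar>B\<bar>"
      using f by (auto intro: mult_left_le)
    finally show "H2_norm beta (\<lambda>z. h z * f z) \<le> \<bar>B\<bar>" .
  qed
  then have unit: "H2_norm beta (\<lambda>z. h z * f z) \<le> mult_norm beta h"
    if "f \<in> H2 beta" "H2_norm beta f \<le> 1" for f
    unfolding mult_norm_def by (rule cSUP_upper[rotated]) (use that in auto)
  show ?thesis
  proof (cases "H2_norm beta g = 0")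
    case True
    then show ?thesis using B[OF g] by simp
  next
    case False
    define \<nu> where "\<nu> = H2_norm beta g"
    have \<nu>: "\<nu> > 0" using False nonneg[OF g] unfolding \<nu>_def by simp
    let ?g = "\<lambda>z. complex_of_real (1 / \<nu>) * g z"
    have "H2_norm beta (\<lambda>z. h z * ?g z) \<le> mult_norm beta h"
      using H2_cmult[OF g, of "complex_of_real (1 / \<nu>)"] \<nu>
      by (intro unit) (auto simp: \<nu>_def norm_divide)
    moreover have "(\<lambda>z. h z * ?g z) = (\<lambda>z. complex_of_real (1 / \<nu>) * (h z * g z))"
      by (simp add: algebra_simps)
    ultimately have "H2_norm beta (\<lambda>z. h z * g z) / \<nu> \<le> mult_norm beta h"
      using H2_cmult(2)[of "\<lambda>z. h z * g z" beta "complex_of_real (1 / \<nu>)"] B[OF g] \<nu>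
      by (simp add: norm_divide)
    then show ?thesis using \<nu> unfolding \<nu>_def by (simp add: field_simps)
  qed
qed

lemma mult_norm_le:
  assumes "0 \<le> B"
    and "\<And>f. f \<in> H2 beta \<Longrightarrow> H2_norm beta (\<lambda>z. h z * f z) \<le> B * H2_norm beta f"
  shows "mult_norm beta h \<le> B"
  unfolding mult_norm_def
proof (rule cSUP_least)
  show "{f \<in> H2 beta. H2_norm beta f \<le> 1} \<noteq> {}"
    using H2_zero H2_norm_zero by force
  fix f assume f: "f \<in> {f \<in> H2 beta. H2_norm beta f \<le> 1}"
  then have "H2_norm beta (\<lambda>z. h z * f z) \<le> B * H2_norm beta f" using assms(2) by simp
  also have "\<dots> \<le> B" using f assms(1) by (auto intro: mult_left_le)
  finally show "H2_norm beta (\<lambda>z. h z * f z) \<le> B" .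
qed

lemma mult_norm_nonneg:
  assumes pos: "\<And>n. beta n > 0"
    and B: "\<And>f. f \<in> H2 beta \<Longrightarrow>
              (\<lambda>z. h z * f z) \<in> H2 beta \<and> H2_norm beta (\<lambda>z. h z * f z) \<le> B * H2_norm beta f"
  shows "0 \<le> mult_norm beta h"
proof -
  have "0 \<le> H2_norm beta (\<lambda>z. h z * z ^ 0)"
    using B[OF H2_power[of 0]] pos by (intro H2_norm_nonneg) (auto intro: less_imp_le)
  also have "\<dots> \<le> mult_norm beta h * sqrt (beta 0)"
    using H2_norm_mult_le_mult_norm[OF pos B H2_power[of 0]] H2_norm_power[of beta 0] by simp
  finally show ?thesis using pos[of 0] by (simp add: zero_le_mult_iff)
qed

lemma H2_norm_multiplier_power_le:
  assumes pos: "\<And>n. beta n > 0"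
    and B: "\<And>f. f \<in> H2 beta \<Longrightarrow>
              (\<lambda>z. h z * f z) \<in> H2 beta \<and> H2_norm beta (\<lambda>z. h z * f z) \<le> B * H2_norm beta f"
  shows "(\<lambda>z. h z ^ n) \<in> H2 beta \<and> H2_norm beta (\<lambda>z. h z ^ n) \<le> mult_norm beta h ^ n * sqrt (beta 0)"
proof (induction n)
  case 0
  show ?case using H2_power[of 0 beta] H2_norm_power[of beta 0] by simp
next
  case (Suc n)
  have "H2_norm beta (\<lambda>z. h z ^ Suc n) \<le> mult_norm beta h * H2_norm beta (\<lambda>z. h z ^ n)"
    using H2_norm_mult_le_mult_norm[OF pos B] Suc by simp
  also have "\<dots> \<le> mult_norm beta h ^ Suc n * sqrt (beta 0)"
    using Suc mult_norm_nonneg[OF pos B] by (simp add: mult.assoc mult_left_mono)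
  finally show ?case using B Suc by simp
qed

lemma sup_norm_le_mult_norm:
  assumes pos: "\<And>n. beta n > 0"
    and lim: "liminf (\<lambda>n. ereal (root n (beta n))) \<ge> 1"
    and B: "\<And>f. f \<in> H2 beta \<Longrightarrow>
              (\<lambda>z. h z * f z) \<in> H2 beta \<and> H2_norm beta (\<lambda>z. h z * f z) \<le> B * H2_norm beta f"
  shows "sup_norm h \<le> mult_norm beta h"
proof (rule sup_norm_le)
  fix w :: complex assume w: "norm w < 1"
  define M where "M = mult_norm beta h"
  define A where "A = sqrt (beta 0) * kernel_norm beta w"
  have K: "kernel_norm beta w > 0" by (rule kernel_norm_pos[OF pos lim w])
  then have A: "A > 0" using pos[of 0] by (simp add: A_def)
  have M: "0 \<le> M" unfolding M_def by (rule mult_norm_nonneg[OF pos B])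
  have le: "norm (h w) \<le> M * root n A" if n: "n > 0" for n
  proof -
    have hn: "(\<lambda>z. h z ^ n) \<in> H2 beta" "H2_norm beta (\<lambda>z. h z ^ n) \<le> M ^ n * sqrt (beta 0)"
      using H2_norm_multiplier_power_le[OF pos B, of n] by (auto simp: M_def)
    have "norm (h w) ^ n = norm (h w ^ n)" by (simp add: norm_power)
    also have "\<dots> \<le> H2_norm beta (\<lambda>z. h z ^ n) * kernel_norm beta w"
      using H2_point_eval_le[OF pos lim hn(1) w] by simp
    also have "\<dots> \<le> M ^ n * A"
      using mult_right_mono[OF hn(2), of "kernel_norm beta w"] K by (simp add: A_def mult.assoc)
    finally have "root n (norm (h w) ^ n) \<le> root n (M ^ n * A)"
      using n by (intro real_root_le_mono)
    then show ?thesis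
      using n M by (simp add: real_root_mult real_root_power_cancel)
  qed
  have "(\<lambda>n. M * root n A) \<longlonglongrightarrow> M"
    using tendsto_mult[OF tendsto_const LIMSEQ_root_const[OF A], of M] by simp
  then show "norm (h w) \<le> mult_norm beta h"
    unfolding M_def[symmetric] by (rule LIMSEQ_le_const) (use le in \<open>auto intro!: exI[of _ 1]\<close>)
qed


section \<open>Discrete Parseval identity\<close>

lemma sum_roots_unity_orthogonal:
  assumes "n < N" "m < N"
  shows "(\<Sum>j<N. (cis (2 * pi * real n / real N) * cnj (cis (2 * pi * real m / real N))) ^ j)
         = (if n = m then of_nat N else 0)"
proof -
  let ?u = "\<lambda>k. cis (2 * pi * real k / real N)"
  have N: "N > 0" using assms by simp
  have c: "?u n * cnj (?u m) = ?u n / ?u m"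
    by (simp add: cis_cnj cis_divide cis_mult)
  show ?thesis
  proof (cases "n = m")
    case True
    then show ?thesis unfolding c by simp
  next
    case False
    have root: "?u k ^ N = 1" for k
      using N by (simp add: Complex.DeMoivre)
    have "?u n \<noteq> ?u m"
      using False assms inj_onD[OF bij_betw_imp_inj_on[OF Complex.bij_betw_roots_unity[OF N]]]
      by auto
    then have "?u n / ?u m \<noteq> 1" by simp
    moreover have "(?u n / ?u m) ^ N = 1" by (simp add: power_divide root)
    ultimately show ?thesis using False unfolding c by (simp add: sum_gp_strict)
  qed
qed

lemma discrete_Parseval:
  fixes b :: "nat \<Rightarrow> complex"
  shows "(\<Sum>j<N. (cmod (\<Sum>n<N. b n * cis (2 * pi * real n / real N) ^ j))\<^sup>2)
         = real N * (\<Sum>n<N. (cmod (b n))\<^sup>2)"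
proof -
  let ?u = "\<lambda>k. cis (2 * pi * real k / real N)"
  have expand: "(b n * ?u n ^ j) * cnj (b m * ?u m ^ j) = (b n * cnj (b m)) * (?u n * cnj (?u m)) ^ j"
    for n m j
    by (simp add: power_mult_distrib mult_ac)
  have "complex_of_real (\<Sum>j<N. (cmod (\<Sum>n<N. b n * ?u n ^ j))\<^sup>2)
      = (\<Sum>j<N. \<Sum>n<N. \<Sum>m<N. (b n * ?u n ^ j) * cnj (b m * ?u m ^ j))"
    by (simp only: of_real_sum complex_norm_square cnj_sum sum_product)
  also have "\<dots> = (\<Sum>j<N. \<Sum>n<N. \<Sum>m<N. (b n * cnj (b m)) * (?u n * cnj (?u m)) ^ j)"
    by (simp only: expand)
  also have "\<dots> = (\<Sum>n<N. \<Sum>m<N. \<Sum>j<N. (b n * cnj (b m)) * (?u n * cnj (?u m)) ^ j)"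
    by (subst sum.swap) (rule sum.cong[OF refl], rule sum.swap)
  also have "\<dots> = (\<Sum>n<N. \<Sum>m<N. (b n * cnj (b m)) * (if n = m then of_nat N else 0))"
    by (intro sum.cong refl) (simp add: sum_roots_unity_orthogonal flip: sum_distrib_left)
  also have "\<dots> = (\<Sum>n<N. (b n * cnj (b n)) * of_nat N)"
    by (simp add: if_distrib cong: if_cong)
  also have "\<dots> = complex_of_real (real N * (\<Sum>n<N. (cmod (b n))\<^sup>2))"
    unfolding of_real_mult of_real_sum of_real_of_nat_eq complex_norm_square
    by (simp add: sum_distrib_left mult_ac)
  finally show ?thesis using of_real_eq_iff by blast
qed

lemma poly_Parseval_roots_unity:
  fixes Q :: "complex poly"
  assumes deg: "degree Q < N" and r: "r \<ge> 0"
  shows "(\<Sum>j<N. (cmod (poly Q (of_real r * cis (2 * pi * real j / real N))))\<^sup>2)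
         = real N * (\<Sum>n<N. (cmod (coeff Q n))\<^sup>2 * r ^ (2 * n))"
proof -
  have "poly Q z = (\<Sum>n<N. coeff Q n * z ^ n)" for z
    unfolding poly_altdef using deg
    by (intro sum.mono_neutral_left) (auto simp: coeff_eq_0)
  moreover have "cis (2 * pi * real j / real N) ^ n = cis (2 * pi * real n / real N) ^ j" for j n
    unfolding Complex.DeMoivre by (simp add: mult_ac)
  ultimately have "poly Q (of_real r * cis (2 * pi * real j / real N))
      = (\<Sum>n<N. (coeff Q n * of_real r ^ n) * cis (2 * pi * real n / real N) ^ j)" for j
    by (simp add: power_mult_distrib mult_ac)
  then have "(\<Sum>j<N. (cmod (poly Q (of_real r * cis (2 * pi * real j / real N))))\<^sup>2)
      = real N * (\<Sum>n<N. (cmod (coeff Q n * of_real r ^ n))\<^sup>2)"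
    by (simp add: discrete_Parseval)
  also have "\<dots> = real N * (\<Sum>n<N. (cmod (coeff Q n))\<^sup>2 * r ^ (2 * n))"
    using r by (simp add: norm_mult norm_power power_mult_distrib flip: power_mult) (simp add: mult.commute)
  finally show ?thesis .
qed


section \<open>Truncated multiplication estimate\<close>

text \<open>On the circle \<open>|z| = r\<close> the discrete Parseval identity, applied to truncated Taylor
  polynomials, compares coefficient sums with values; the truncation error of \<open>h\<close>
  vanishes as \<open>M \<rightarrow> \<infinity>\<close>, and finally \<open>r \<rightarrow> 1\<close>.\<close>

lemma partial_coeff_sum_mult_le_taylor_bound:
  assumes h: "h holomorphic_on ball 0 1" and f: "f holomorphic_on ball 0 1"
    and r: "0 \<le> r" "r < 1" and "k \<le> M"
    and bound: "\<And>z. norm z = r \<Longrightarrow> norm (poly (taylor_poly h M) z) \<le> B"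
  shows "(\<Sum>n\<le>k. (cmod (tcoeff (\<lambda>z. h z * f z) n))\<^sup>2 * r ^ (2 * n))
         \<le> B\<^sup>2 * (\<Sum>n\<le>k. (cmod (tcoeff f n))\<^sup>2)"
proof -
  define H where "H = taylor_poly h M"
  define P where "P = taylor_poly f k"
  define N where "N = M + k + 1"
  define z where "z j = of_real r * cis (2 * pi * real j / real N)" for j
  have N: "N > 0" "degree (H * P) < N" "degree P < N"
    using degree_mult_le[of H P] degree_taylor_poly[of h M] degree_taylor_poly[of f k]
    by (auto simp: N_def H_def P_def)
  have B: "0 \<le> B" using bound[of "of_real r"] r by (auto intro: order.trans[OF norm_ge_zero])
  have zr: "norm (z j) = r" for j using r by (simp add: z_def norm_mult)
  have "real N * (\<Sum>n\<le>k. (cmod (tcoeff (\<lambda>z. h z * f z) n))\<^sup>2 * r ^ (2 * n))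
      = real N * (\<Sum>n\<le>k. (cmod (coeff (H * P) n))\<^sup>2 * r ^ (2 * n))"
    using coeff_taylor_poly_mult[OF h f _ \<open>k \<le> M\<close>] by (simp add: H_def P_def)
  also have "\<dots> \<le> real N * (\<Sum>n<N. (cmod (coeff (H * P) n))\<^sup>2 * r ^ (2 * n))"
    using r by (intro mult_left_mono sum_mono2) (auto simp: N_def)
  also have "\<dots> = (\<Sum>j<N. (cmod (poly H (z j)))\<^sup>2 * (cmod (poly P (z j)))\<^sup>2)"
    unfolding poly_Parseval_roots_unity[OF N(2) r(1), symmetric] z_def
    by (simp add: norm_mult power_mult_distrib)
  also have "\<dots> \<le> (\<Sum>j<N. B\<^sup>2 * (cmod (poly P (z j)))\<^sup>2)"
    using bound[OF zr] by (intro sum_mono mult_right_mono power_mono) (auto simp: H_def)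
  also have "\<dots> = B\<^sup>2 * (real N * (\<Sum>n<N. (cmod (coeff P n))\<^sup>2 * r ^ (2 * n)))"
    unfolding sum_distrib_left[symmetric] z_def poly_Parseval_roots_unity[OF N(3) r(1)] ..
  also have "(\<Sum>n<N. (cmod (coeff P n))\<^sup>2 * r ^ (2 * n)) = (\<Sum>n\<le>k. (cmod (coeff P n))\<^sup>2 * r ^ (2 * n))"
    by (rule sum.mono_neutral_right) (auto simp: N_def P_def coeff_taylor_poly)
  also have "\<dots> = (\<Sum>n\<le>k. (cmod (tcoeff f n))\<^sup>2 * r ^ (2 * n))"
    by (simp add: P_def coeff_taylor_poly)
  also have "\<dots> \<le> (\<Sum>n\<le>k. (cmod (tcoeff f n))\<^sup>2)"
    using r by (intro sum_mono mult_left_le power_le_one) auto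
  finally show ?thesis
    using N(1) B by (simp add: mult_left_mono mult.left_commute[of "real N"])
qed

lemma norm_taylor_poly_le:
  assumes h: "h holomorphic_on ball 0 1" and S: "\<And>z. norm z < 1 \<Longrightarrow> norm (h z) \<le> S"
    and z: "norm z < 1"
  shows "norm (poly (taylor_poly h M) z) \<le> S + (\<Sum>i. norm (tcoeff h (i + Suc M) * z ^ (i + Suc M)))"
proof -
  have sa: "summable (\<lambda>n. norm (tcoeff h n * z ^ n))"
    by (rule summable_norm_tcoeff_power[OF h z])
  have "h z = (\<Sum>n. tcoeff h n * z ^ n)"
    using tcoeff_sums[OF h z] by (simp add: sums_iff)
  also have "\<dots> = (\<Sum>i. tcoeff h (i + Suc M) * z ^ (i + Suc M)) + poly (taylor_poly h M) z"
    unfolding poly_taylor_poly lessThan_Suc_atMost[symmetric]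
    by (rule suminf_split_initial_segment[OF summable_norm_cancel[OF sa]])
  finally have "poly (taylor_poly h M) z = h z - (\<Sum>i. tcoeff h (i + Suc M) * z ^ (i + Suc M))"
    by simp
  also have "norm \<dots> \<le> norm (h z) + (\<Sum>i. norm (tcoeff h (i + Suc M) * z ^ (i + Suc M)))"
    using summable_norm[OF summable_ignore_initial_segment[OF sa, of "Suc M"]]
    by (intro order.trans[OF norm_triangle_ineq4] add_left_mono) auto
  finally show ?thesis using S[OF z] by linarith
qed

lemma suminf_tail_tendsto_0:
  fixes g :: "nat \<Rightarrow> real"
  assumes "summable g"
  shows "(\<lambda>M. \<Sum>i. g (i + M)) \<longlonglongrightarrow> 0"
proof (rule LIMSEQ_I)
  fix e :: real assume "0 < e"
  from suminf_exist_split[OF this assms]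
  show "\<exists>N. \<forall>n\<ge>N. norm ((\<Sum>i. g (i + n)) - 0) < e" by simp
qed

lemma partial_coeff_sum_mult_circle_le:
  assumes h: "h holomorphic_on ball 0 1" and S: "\<And>z. norm z < 1 \<Longrightarrow> norm (h z) \<le> S"
    and f: "f holomorphic_on ball 0 1" and r: "0 \<le> r" "r < 1"
  shows "(\<Sum>n\<le>k. (cmod (tcoeff (\<lambda>z. h z * f z) n))\<^sup>2 * r ^ (2 * n))
         \<le> S\<^sup>2 * (\<Sum>n\<le>k. (cmod (tcoeff f n))\<^sup>2)"
proof -
  define g where "g i = norm (tcoeff h i) * r ^ i" for i
  define E where "E M = (\<Sum>i. g (i + Suc M))" for M
  have gz: "norm (tcoeff h i * z ^ i) = g i" if "norm z = r" for z i
    using that by (simp add: g_def norm_mult norm_power)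
  have "summable g"
    using summable_norm_tcoeff_power[OF h, of "of_real r"] r gz[of "of_real r"] by simp
  then have "E \<longlonglongrightarrow> 0"
    unfolding E_def using LIMSEQ_Suc[OF suminf_tail_tendsto_0] by simp
  then have "(\<lambda>M. (S + E M)\<^sup>2 * (\<Sum>n\<le>k. (cmod (tcoeff f n))\<^sup>2))
      \<longlonglongrightarrow> (S + 0)\<^sup>2 * (\<Sum>n\<le>k. (cmod (tcoeff f n))\<^sup>2)"
    by (intro tendsto_intros)
  then have lim: "(\<lambda>M. (S + E M)\<^sup>2 * (\<Sum>n\<le>k. (cmod (tcoeff f n))\<^sup>2))
      \<longlonglongrightarrow> S\<^sup>2 * (\<Sum>n\<le>k. (cmod (tcoeff f n))\<^sup>2)"
    by simp
  have le: "(\<Sum>n\<le>k. (cmod (tcoeff (\<lambda>z. h z * f z) n))\<^sup>2 * r ^ (2 * n))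
      \<le> (S + E M)\<^sup>2 * (\<Sum>n\<le>k. (cmod (tcoeff f n))\<^sup>2)" if "k \<le> M" for M
  proof (rule partial_coeff_sum_mult_le_taylor_bound[OF h f r that])
    fix z :: complex assume z: "norm z = r"
    then have "norm z < 1" using r by simp
    from norm_taylor_poly_le[OF h S this, of M]
    show "norm (poly (taylor_poly h M) z) \<le> S + E M"
      unfolding E_def gz[OF z] .
  qed
  show ?thesis
    by (rule LIMSEQ_le_const[OF lim]) (use le in \<open>auto intro!: exI[of _ k]\<close>)
qed

lemma partial_coeff_sum_mult_le:
  assumes h: "h holomorphic_on ball 0 1" and S: "\<And>z. norm z < 1 \<Longrightarrow> norm (h z) \<le> S"
    and f: "f holomorphic_on ball 0 1"
  shows "(\<Sum>n\<le>k. (cmod (tcoeff (\<lambda>z. h z * f z) n))\<^sup>2) \<le> S\<^sup>2 * (\<Sum>n\<le>k. (cmod (tcoeff f n))\<^sup>2)"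
proof -
  define r where "r m = real m / real (Suc m)" for m
  have "r \<longlonglongrightarrow> 1" unfolding r_def by (rule LIMSEQ_n_over_Suc_n)
  then have "(\<lambda>m. \<Sum>n\<le>k. (cmod (tcoeff (\<lambda>z. h z * f z) n))\<^sup>2 * r m ^ (2 * n))
      \<longlonglongrightarrow> (\<Sum>n\<le>k. (cmod (tcoeff (\<lambda>z. h z * f z) n))\<^sup>2 * 1 ^ (2 * n))"
    by (intro tendsto_intros)
  then have lim: "(\<lambda>m. \<Sum>n\<le>k. (cmod (tcoeff (\<lambda>z. h z * f z) n))\<^sup>2 * r m ^ (2 * n))
      \<longlonglongrightarrow> (\<Sum>n\<le>k. (cmod (tcoeff (\<lambda>z. h z * f z) n))\<^sup>2)"
    by simp
  have "0 \<le> r m" "r m < 1" for m unfolding r_def by auto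
  then show ?thesis
    by (intro LIMSEQ_le_const2[OF lim] exI[of _ 0] allI impI partial_coeff_sum_mult_circle_le[OF h S f])
qed


section \<open>Sufficiency of essential decrease\<close>

lemma sum_by_parts_atMost:
  fixes d g :: "nat \<Rightarrow> real"
  shows "(\<Sum>n\<le>K. d n * g n) = (\<Sum>k<K. (\<Sum>n\<le>k. d n) * (g k - g (Suc k))) + (\<Sum>n\<le>K. d n) * g K"
  by (induction K) (simp_all add: algebra_simps)

lemma sum_mult_decreasing_le:
  fixes x y g :: "nat \<Rightarrow> real"
  assumes partial: "\<And>k. (\<Sum>n\<le>k. x n) \<le> (\<Sum>n\<le>k. y n)"
    and dec: "\<And>n. g (Suc n) \<le> g n" and nonneg: "\<And>n. g n \<ge> 0"
  shows "(\<Sum>n\<le>K. x n * g n) \<le> (\<Sum>n\<le>K. y n * g n)"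
proof -
  have D: "(\<Sum>n\<le>k. y n - x n) \<ge> 0" for k
    using partial[of k] by (simp add: sum_subtractf)
  have "(\<Sum>n\<le>K. (y n - x n) * g n) \<ge> 0"
    unfolding sum_by_parts_atMost
    by (intro add_nonneg_nonneg sum_nonneg mult_nonneg_nonneg D nonneg) (use dec in auto)
  then show ?thesis by (simp add: algebra_simps sum_subtractf)
qed

lemma decreasing_majorant:
  fixes beta :: "nat \<Rightarrow> real"
  assumes pos: "\<And>n. beta n > 0" and dec: "\<And>m n. n \<le> m \<Longrightarrow> beta m \<le> C * beta n"
  obtains g where "\<And>n. beta n \<le> g n" "\<And>n. g n \<le> C * beta n" "\<And>n. g (Suc n) \<le> g n"
proof
  define g where "g n = (SUP m\<in>{n..}. beta m)" for n
  have bdd: "bdd_above (beta ` {n..})" for n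
    using dec by (intro bdd_aboveI2[of _ _ "C * beta 0"]) auto
  show "beta n \<le> g n" for n unfolding g_def by (rule cSUP_upper[OF _ bdd]) auto
  show "g n \<le> C * beta n" for n unfolding g_def using dec by (intro cSUP_least) auto
  show "g (Suc n) \<le> g n" for n unfolding g_def by (rule cSUP_subset_mono[OF _ bdd]) auto
qed

lemma partial_weighted_coeff_sum_mult_le:
  fixes beta :: "nat \<Rightarrow> real"
  assumes pos: "\<And>n. beta n > 0" and dec: "\<And>m n. n \<le> m \<Longrightarrow> beta m \<le> C * beta n"
    and h: "h \<in> Hinf" and f: "f holomorphic_on ball 0 1"
  shows "(\<Sum>n\<le>K. (norm (tcoeff (\<lambda>z. h z * f z) n))\<^sup>2 * beta n)
         \<le> C * (sup_norm h)\<^sup>2 * (\<Sum>n\<le>K. (norm (tcoeff f n))\<^sup>2 * beta n)"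
proof -
  obtain g where bg: "\<And>n. beta n \<le> g n" and gC: "\<And>n. g n \<le> C * beta n"
    and gdec: "\<And>n. g (Suc n) \<le> g n"
    by (rule decreasing_majorant[of beta C]) (use pos dec in auto)
  have g0: "g n \<ge> 0" for n using bg[of n] pos[of n] by simp
  have hol_h: "h holomorphic_on ball 0 1" using h unfolding Hinf_def by auto
  have "(\<Sum>n\<le>K. (norm (tcoeff (\<lambda>z. h z * f z) n))\<^sup>2 * beta n)
      \<le> (\<Sum>n\<le>K. (norm (tcoeff (\<lambda>z. h z * f z) n))\<^sup>2 * g n)"
    by (intro sum_mono mult_left_mono bg) auto
  also have "\<dots> \<le> (\<Sum>n\<le>K. ((sup_norm h)\<^sup>2 * (norm (tcoeff f n))\<^sup>2) * g n)"
    using partial_coeff_sum_mult_le[OF hol_h norm_le_sup_norm[OF h] f]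
    by (intro sum_mult_decreasing_le[where g = g, OF _ gdec g0]) (simp add: sum_distrib_left)
  also have "\<dots> \<le> (\<Sum>n\<le>K. ((sup_norm h)\<^sup>2 * (norm (tcoeff f n))\<^sup>2) * (C * beta n))"
    by (intro sum_mono mult_left_mono gC) auto
  also have "\<dots> = C * (sup_norm h)\<^sup>2 * (\<Sum>n\<le>K. (norm (tcoeff f n))\<^sup>2 * beta n)"
    by (simp add: sum_distrib_left mult_ac)
  finally show ?thesis .
qed

lemma
  fixes beta :: "nat \<Rightarrow> real"
  assumes pos: "\<And>n. beta n > 0" and dec: "\<And>m n. n \<le> m \<Longrightarrow> beta m \<le> C * beta n"
    and h: "h \<in> Hinf" and f: "f \<in> H2 beta"
  shows mult_in_H2_if_ess_decreasing: "(\<lambda>z. h z * f z) \<in> H2 beta"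
    and H2_norm_mult_le_if_ess_decreasing:
      "H2_norm beta (\<lambda>z. h z * f z) \<le> sqrt C * sup_norm h * H2_norm beta f"
proof -
  define F where "F = (\<Sum>n. (norm (tcoeff f n))\<^sup>2 * beta n)"
  define d where "d n = (norm (tcoeff (\<lambda>z. h z * f z) n))\<^sup>2 * beta n" for n
  have hol_f: "f holomorphic_on ball 0 1"
    and sf: "summable (\<lambda>n. (norm (tcoeff f n))\<^sup>2 * beta n)"
    using f unfolding H2_def by auto
  have C: "C \<ge> 0" using dec[of 0 0] pos[of 0] by (simp add: zero_le_mult_iff)
  have F: "F \<ge> 0" unfolding F_def using sf by (intro suminf_nonneg) (auto simp: less_imp_le[OF pos])
  have partial: "(\<Sum>n<K. d n) \<le> C * (sup_norm h)\<^sup>2 * F" for K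
  proof (cases K)
    case 0
    then show ?thesis using C F by simp
  next
    case (Suc K')
    have "(\<Sum>n\<le>K'. d n) \<le> C * (sup_norm h)\<^sup>2 * (\<Sum>n\<le>K'. (norm (tcoeff f n))\<^sup>2 * beta n)"
      unfolding d_def by (rule partial_weighted_coeff_sum_mult_le[OF pos dec h hol_f])
    also have "\<dots> \<le> C * (sup_norm h)\<^sup>2 * F"
      unfolding F_def using C by (intro mult_left_mono sum_le_suminf sf) (auto simp: less_imp_le[OF pos])
    finally show ?thesis using Suc by (simp add: lessThan_Suc_atMost)
  qed
  have sd: "summable d"
    by (intro summableI_nonneg_bounded[OF _ partial]) (auto simp: d_def less_imp_le[OF pos])
  then show "(\<lambda>z. h z * f z) \<in> H2 beta"
    unfolding H2_def d_def using h hol_f by (auto simp: Hinf_def intro!: holomorphic_intros)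
  have "sqrt (\<Sum>n. d n) \<le> sqrt (C * (sup_norm h)\<^sup>2 * F)"
    by (intro real_sqrt_le_mono suminf_le_const[OF sd partial])
  also have "\<dots> = sqrt C * sup_norm h * sqrt F"
    using sup_norm_nonneg[OF h] by (simp add: real_sqrt_mult)
  finally show "H2_norm beta (\<lambda>z. h z * f z) \<le> sqrt C * sup_norm h * H2_norm beta f"
    unfolding H2_norm_def d_def F_def .
qed


section \<open>Multipliers are bounded\<close>

lemma infsum_eq_suminf:
  fixes f :: "nat \<Rightarrow> 'a::banach"
  assumes "summable (\<lambda>n. norm (f n))"
  shows "infsum f UNIV = suminf f"
  using assms by (intro infsumI norm_summable_imp_has_sum) (auto intro: summable_sums summable_norm_cancel)

lemma summable_on_Times_dominated:
  fixes u :: "nat \<Rightarrow> nat \<Rightarrow> 'a::banach" and p q :: "nat \<Rightarrow> real"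
  assumes u: "\<And>j n. norm (u j n) \<le> p j * q n"
    and p: "summable p" "\<And>j. p j \<ge> 0" and q: "summable q" "\<And>n. q n \<ge> 0"
  shows "(\<lambda>(j, n). u j n) summable_on UNIV \<times> UNIV"
proof -
  have "(\<lambda>(j, n). p j * q n) summable_on UNIV \<times> UNIV"
  proof (rule summable_on_SigmaI[where g = "\<lambda>j. p j * suminf q"])
    show "((\<lambda>n. case (j, n) of (j, n) \<Rightarrow> p j * q n) has_sum p j * suminf q) UNIV" for j
      using p(2)[of j] q
      by (auto intro!: norm_summable_imp_has_sum summable_mult sums_mult summable_sums)
    show "(\<lambda>j. p j * suminf q) summable_on UNIV"
      using p q by (intro summable_nonneg_imp_summable_on summable_mult2 mult_nonneg_nonneg suminf_nonneg)
  qed (use p(2) q(2) in auto)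
  then have "(\<lambda>(j, n). norm (u j n)) summable_on UNIV \<times> UNIV"
    by (rule summable_on_comparison_test) (auto simp: u)
  then have "(\<lambda>x. norm ((\<lambda>(j, n). u j n) x)) summable_on UNIV \<times> UNIV"
    by (simp add: case_prod_unfold)
  then show "(\<lambda>(j, n). u j n) summable_on UNIV \<times> UNIV"
    by (rule abs_summable_summable)
qed

lemma suminf_swap_dominated:
  fixes u :: "nat \<Rightarrow> nat \<Rightarrow> 'a::banach" and p q :: "nat \<Rightarrow> real"
  assumes u: "\<And>j n. norm (u j n) \<le> p j * q n"
    and p: "summable p" "\<And>j. p j \<ge> 0" and q: "summable q" "\<And>n. q n \<ge> 0"
  shows "(\<Sum>j. \<Sum>n. u j n) = (\<Sum>n. \<Sum>j. u j n)"
proof -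
  have swap: "infsum (\<lambda>j. infsum (\<lambda>n. u j n) UNIV) UNIV = infsum (\<lambda>n. infsum (\<lambda>j. u j n) UNIV) UNIV"
    by (rule infsum_swap_banach[OF summable_on_Times_dominated[OF u p q]])
  have row: "summable (\<lambda>n. norm (u j n))" for j
    by (rule summable_comparison_test'[OF summable_mult[OF q(1), of "p j"]]) (simp add: u)
  have "(\<Sum>n. norm (u j n)) \<le> (\<Sum>n. p j * q n)" for j
    by (rule suminf_le[OF _ row summable_mult[OF q(1)]]) (rule u)
  then have row_le: "(\<Sum>n. norm (u j n)) \<le> p j * suminf q" for j
    by (simp add: suminf_mult[OF q(1)])
  have col: "summable (\<lambda>j. norm (u j n))" for n
    by (rule summable_comparison_test'[OF summable_mult2[OF p(1), of "q n"]]) (simp add: u)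
  have "(\<Sum>j. norm (u j n)) \<le> (\<Sum>j. p j * q n)" for n
    by (rule suminf_le[OF _ col summable_mult2[OF p(1)]]) (rule u)
  then have col_le: "(\<Sum>j. norm (u j n)) \<le> suminf p * q n" for n
    by (simp add: suminf_mult2[OF p(1)])
  have "summable (\<lambda>j. norm (\<Sum>n. u j n))"
    by (rule summable_comparison_test'[OF summable_mult2[OF p(1), of "suminf q"]])
       (use summable_norm[OF row] row_le in \<open>auto intro: order.trans\<close>)
  moreover have "summable (\<lambda>n. norm (\<Sum>j. u j n))"
    by (rule summable_comparison_test'[OF summable_mult[OF q(1), of "suminf p"]])
       (use summable_norm[OF col] col_le in \<open>auto intro: order.trans\<close>)
  ultimately show ?thesis
    using swap by (simp add: infsum_eq_suminf row col)
qed

text \<open>If \<open>|h(w\<^sub>m)| > 2 * 3\<^sup>m * (m + 1)\<close> for all \<open>m\<close>, test \<open>h\<close> against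
  \<open>f = \<Sum>\<^sub>j \<plusminus>3\<^sup>-\<^sup>j k\<^sub>j\<close>, where \<open>k\<^sub>j\<close> is the normalised reproducing kernel at \<open>w\<^sub>j\<close>: its
  coefficients are \<open>kernel_coeff j\<close>, its value at \<open>w\<^sub>m\<close> is \<open>kernel_val j m\<close>, and
  \<open>|kernel_val j m| \<le> K m = kernel_val m m\<close>.  The signs are chosen inductively so that in
  \<open>f(w\<^sub>m)\<close> the \<open>m\<close>-th term is not cancelled by the earlier ones, while the later ones add up
  to at most half of it.  Then \<open>|f(w\<^sub>m)| \<ge> 3\<^sup>-\<^sup>m K m / 2\<close>, and evaluating \<open>h f\<close> at \<open>w\<^sub>m\<close>
  gives \<open>\<parallel>h f\<parallel> > m + 1\<close> for every \<open>m\<close>.\<close>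

locale gliding_hump =
  fixes beta :: "nat \<Rightarrow> real" and w :: "nat \<Rightarrow> complex"
  assumes pos: "\<And>n. beta n > 0"
    and lim: "liminf (\<lambda>n. ereal (root n (beta n))) \<ge> 1"
    and w: "\<And>m. norm (w m) < 1"
begin

abbreviation K :: "nat \<Rightarrow> real" where
  "K m \<equiv> kernel_norm beta (w m)"

lemma K_pos: "K m > 0" and inverse_K_le: "1 / K m \<le> sqrt (beta 0)"
  using kernel_norm_pos[OF pos lim w] inverse_kernel_norm_le[OF pos lim w] by auto

lemma summable_kernel_w: "summable (\<lambda>n. (norm (w m) ^ 2) ^ n / beta n)"
  by (rule summable_kernel[OF pos lim w])

lemma K_sq: "(K m)\<^sup>2 = (\<Sum>n. (norm (w m) ^ 2) ^ n / beta n)"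
  using summable_kernel_w[of m] by (simp add: kernel_norm_def suminf_nonneg less_imp_le[OF pos])

definition kernel_coeff :: "nat \<Rightarrow> nat \<Rightarrow> complex" where
  "kernel_coeff j n = cnj (w j) ^ n / complex_of_real (beta n * K j)"

definition kernel_val :: "nat \<Rightarrow> nat \<Rightarrow> complex" where
  "kernel_val j m = (\<Sum>n. kernel_coeff j n * w m ^ n)"

lemma norm_kernel_coeff: "norm (kernel_coeff j n) = norm (w j) ^ n / (beta n * K j)"
  unfolding kernel_coeff_def norm_divide norm_power complex_mod_cnj norm_of_real
  using pos[of n] K_pos[of j] by simp

lemma kernel_coeff_sums: "(\<lambda>n. (norm (kernel_coeff j n))\<^sup>2 * beta n) sums 1"
proof -
  have *: "(x / (b * k))\<^sup>2 * b = (x\<^sup>2 / b) / k\<^sup>2" if "b > 0" "k > 0" for x b k :: real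
    using that by (simp add: power2_eq_square field_simps)
  have eq: "(norm (kernel_coeff j n))\<^sup>2 * beta n = ((norm (w j) ^ 2) ^ n / beta n) / (K j)\<^sup>2" for n
    unfolding norm_kernel_coeff *[OF pos K_pos] by (simp add: power_mult[symmetric] mult.commute)
  have "(\<lambda>n. ((norm (w j) ^ 2) ^ n / beta n) / (K j)\<^sup>2)
          sums ((\<Sum>n. (norm (w j) ^ 2) ^ n / beta n) / (K j)\<^sup>2)"
    by (rule sums_divide[OF summable_sums[OF summable_kernel_w]])
  also have "(\<Sum>n. (norm (w j) ^ 2) ^ n / beta n) / (K j)\<^sup>2 = 1"
    using K_pos[of j] by (simp flip: K_sq)
  finally show ?thesis unfolding eq .
qed

lemma summable_kernel_coeff: "summable (\<lambda>n. (norm (kernel_coeff j n))\<^sup>2 * beta n)"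
  using kernel_coeff_sums by (rule sums_summable)

lemma partial_sum_kernel_coeff_le: "finite I \<Longrightarrow> (\<Sum>n\<in>I. (norm (kernel_coeff j n))\<^sup>2 * beta n) \<le> 1"
  using sum_le_suminf[OF summable_kernel_coeff[of j], of I] sums_unique[OF kernel_coeff_sums[of j]]
  by (simp add: less_imp_le[OF pos])

lemma norm_kernel_coeff_le: "norm (kernel_coeff j n) \<le> sqrt (beta 0) / beta n"
proof -
  have "norm (kernel_coeff j n) = norm (w j) ^ n * (1 / K j) / beta n" by (simp add: norm_kernel_coeff)
  also have "\<dots> \<le> 1 * sqrt (beta 0) / beta n"
    using pos[of n] w[of j] inverse_K_le[of j] K_pos[of j]
    by (intro divide_right_mono mult_mono) (auto simp: power_le_one)
  finally show ?thesis by simp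
qed

lemma norm_kernel_val_le: "norm (kernel_val j m) \<le> K m"
proof -
  have "norm (kernel_val j m) \<le> (\<Sum>n. norm (kernel_coeff j n * w m ^ n))"
    unfolding kernel_val_def by (rule summable_norm[OF summable_norm_coeff_power[OF pos lim summable_kernel_coeff w]])
  also have "\<dots> \<le> K m"
    using suminf_norm_coeff_power_le[OF pos lim summable_kernel_coeff w] sums_unique[OF kernel_coeff_sums] by simp
  finally show ?thesis .
qed

lemma kernel_val_diag: "kernel_val m m = complex_of_real (K m)"
proof -
  have "kernel_coeff m n * w m ^ n = complex_of_real (((norm (w m) ^ 2) ^ n / beta n) / K m)" for n
  proof -
    have "cnj (w m) ^ n * w m ^ n = (w m * cnj (w m)) ^ n"
      by (simp add: power_mult_distrib mult.commute)
    also have "w m * cnj (w m) = complex_of_real (norm (w m) ^ 2)"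
      by (rule complex_norm_square[symmetric])
    finally have "cnj (w m) ^ n * w m ^ n = complex_of_real ((norm (w m) ^ 2) ^ n)"
      by (simp only: of_real_power)
    then show ?thesis unfolding kernel_coeff_def by (simp add: field_simps)
  qed
  note eq = this
  have "(\<lambda>n. ((norm (w m) ^ 2) ^ n / beta n) / K m)
          sums ((\<Sum>n. (norm (w m) ^ 2) ^ n / beta n) / K m)"
    by (rule sums_divide[OF summable_sums[OF summable_kernel_w]])
  also have "(\<Sum>n. (norm (w m) ^ 2) ^ n / beta n) / K m = K m"
    using K_pos[of m] unfolding K_sq[symmetric] by (simp add: power2_eq_square)
  finally have "(\<lambda>n. kernel_coeff m n * w m ^ n) sums complex_of_real (K m)"
    unfolding eq by (rule sums_of_real)
  then show ?thesis by (simp add: kernel_val_def sums_iff)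
qed

function hump_sign :: "nat \<Rightarrow> real" where
  "hump_sign m =
     (if 0 \<le> Re (\<Sum>j<m. complex_of_real (hump_sign j * (1/3) ^ j) * kernel_val j m) then 1 else -1)"
  by auto
termination by (relation "Wellfounded.measure id") auto

declare hump_sign.simps [simp del]

definition hump_weight :: "nat \<Rightarrow> complex" where
  "hump_weight j = complex_of_real (hump_sign j * (1/3) ^ j)"

definition hump_coeff :: "nat \<Rightarrow> complex" where
  "hump_coeff n = (\<Sum>j. hump_weight j * kernel_coeff j n)"

lemma abs_hump_sign: "\<bar>hump_sign m\<bar> = 1"
  by (subst hump_sign.simps) simp

lemma norm_hump_weight: "norm (hump_weight j) = (1/3) ^ j"
  by (simp add: hump_weight_def norm_mult norm_power abs_hump_sign)

lemma geometric_third_sums: "(\<lambda>j. (1/3::real) ^ j) sums (3/2)"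
  using geometric_sums[of "1/3::real"] by simp

lemma summable_geometric_third: "summable (\<lambda>j. (1/3::real) ^ j)"
  using geometric_third_sums by (rule sums_summable)

lemma norm_hump_weight_kernel_coeff_le: "norm (hump_weight j * kernel_coeff j n) \<le> (1/3) ^ j * (sqrt (beta 0) / beta n)"
  unfolding norm_mult norm_hump_weight by (intro mult_left_mono norm_kernel_coeff_le) simp

lemma summable_norm_hump_weight_kernel_coeff: "summable (\<lambda>j. norm (hump_weight j * kernel_coeff j n))"
  by (rule summable_comparison_test'[OF summable_mult2[OF summable_geometric_third,
                                                      of "sqrt (beta 0) / beta n"]])
     (use norm_hump_weight_kernel_coeff_le in simp)

lemma norm_hump_coeff_sq_le: "(norm (hump_coeff n))\<^sup>2 \<le> 3/2 * (\<Sum>j. (1/3) ^ j * (norm (kernel_coeff j n))\<^sup>2)"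
proof -
  define x where "x j = sqrt ((1/3::real) ^ j)" for j
  define y where "y j = sqrt ((1/3::real) ^ j) * norm (kernel_coeff j n)" for j
  have x2: "(x j)\<^sup>2 = (1/3) ^ j" and y2: "(y j)\<^sup>2 = (1/3) ^ j * (norm (kernel_coeff j n))\<^sup>2" for j
    by (simp_all add: x_def y_def power_mult_distrib)
  have xy: "\<bar>x j * y j\<bar> = norm (hump_weight j * kernel_coeff j n)" for j
    by (simp add: x_def y_def norm_mult norm_hump_weight)
  have sx: "summable (\<lambda>j. (x j)\<^sup>2)" unfolding x2 by (rule summable_geometric_third)
  have sy: "summable (\<lambda>j. (y j)\<^sup>2)" unfolding y2
    by (rule summable_comparison_test'[OF summable_mult2[OF summable_geometric_third,
                of "(sqrt (beta 0) / beta n)\<^sup>2"]])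
       (auto intro!: mult_left_mono power_mono norm_kernel_coeff_le)
  have "norm (hump_coeff n) \<le> (\<Sum>j. norm (hump_weight j * kernel_coeff j n))"
    unfolding hump_coeff_def by (rule summable_norm[OF summable_norm_hump_weight_kernel_coeff])
  also have "\<dots> \<le> sqrt (3/2) * sqrt (\<Sum>j. (1/3) ^ j * (norm (kernel_coeff j n))\<^sup>2)"
    using suminf_abs_mult_le[OF sx sy] unfolding xy x2 y2 sums_unique[OF geometric_third_sums, symmetric] .
  finally have "(norm (hump_coeff n))\<^sup>2 \<le> (sqrt (3/2) * sqrt (\<Sum>j. (1/3) ^ j * (norm (kernel_coeff j n))\<^sup>2))\<^sup>2"
    by (intro power_mono) auto
  also have "\<dots> = 3/2 * (\<Sum>j. (1/3) ^ j * (norm (kernel_coeff j n))\<^sup>2)"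
    using sy unfolding y2 by (simp add: power_mult_distrib suminf_nonneg)
  finally show ?thesis .
qed

lemma summable_hump_coeff: "summable (\<lambda>n. (norm (hump_coeff n))\<^sup>2 * beta n)"
proof (rule summableI_nonneg_bounded)
  fix N
  define v where "v j n = (1/3::real) ^ j * ((norm (kernel_coeff j n))\<^sup>2 * beta n)" for j n
  have v: "0 \<le> v j n" "v j n \<le> (1/3) ^ j" for j n
    using pos[of n] partial_sum_kernel_coeff_le[of "{n}" j] by (auto simp: v_def mult_left_le less_imp_le)
  have sv: "summable (\<lambda>j. v j n)" for n
    by (rule summable_comparison_test'[OF summable_geometric_third]) (use v in auto)
  have "(norm (hump_coeff n))\<^sup>2 * beta n \<le> 3/2 * (\<Sum>j. v j n)" for n
  proof -
    have s: "summable (\<lambda>j. (1/3::real) ^ j * (norm (kernel_coeff j n))\<^sup>2)"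
      using summable_divide[OF sv[of n], of "beta n"] pos[of n] by (simp add: v_def)
    have "(norm (hump_coeff n))\<^sup>2 * beta n \<le> 3/2 * (\<Sum>j. (1/3) ^ j * (norm (kernel_coeff j n))\<^sup>2) * beta n"
      using norm_hump_coeff_sq_le[of n] pos[of n] by (intro mult_right_mono) auto
    also have "\<dots> = 3/2 * (\<Sum>j. v j n)"
      using suminf_mult2[OF s, of "beta n"] by (simp add: v_def mult.assoc)
    finally show ?thesis .
  qed
  then have "(\<Sum>n<N. (norm (hump_coeff n))\<^sup>2 * beta n) \<le> (\<Sum>n<N. 3/2 * (\<Sum>j. v j n))"
    by (rule sum_mono)
  also have "\<dots> = 3/2 * (\<Sum>j. \<Sum>n<N. v j n)"
    by (simp add: suminf_sum[OF sv] sum_distrib_left)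
  also have "\<dots> \<le> 3/2 * (\<Sum>j. (1/3) ^ j)"
    using partial_sum_kernel_coeff_le[of "{..<N}"]
    by (intro mult_left_mono suminf_le summable_sum sv summable_geometric_third)
       (auto simp: v_def mult_left_le simp flip: sum_distrib_left)
  finally show "(\<Sum>n<N. (norm (hump_coeff n))\<^sup>2 * beta n) \<le> 3/2 * (3/2)"
    by (simp add: sums_unique[OF geometric_third_sums, symmetric])
qed (use pos in \<open>simp add: less_imp_le\<close>)

definition hump :: "complex \<Rightarrow> complex" where
  "hump = eval_fps (Abs_fps hump_coeff)"

lemma hump_in_H2: "hump \<in> H2 beta"
  unfolding hump_def by (rule eval_fps_in_H2[OF pos lim summable_hump_coeff])

lemma hump_at_w: "hump (w m) = (\<Sum>j. hump_weight j * kernel_val j m)"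
proof -
  have sl: "summable (\<lambda>n. norm (w m) ^ n / beta n)"
    using summable_power_div_weight[OF pos lim norm_ge_zero w] .
  have "hump (w m) = (\<Sum>n. \<Sum>j. hump_weight j * kernel_coeff j n * w m ^ n)"
    unfolding hump_def eval_fps_def hump_coeff_def
    by (simp add: suminf_mult2[OF summable_norm_cancel[OF summable_norm_hump_weight_kernel_coeff]])
  also have "\<dots> = (\<Sum>j. \<Sum>n. hump_weight j * kernel_coeff j n * w m ^ n)"
  proof (rule suminf_swap_dominated[symmetric])
    show "norm (hump_weight j * kernel_coeff j n * w m ^ n) \<le> (1/3) ^ j * (sqrt (beta 0) * (norm (w m) ^ n / beta n))"
      for j n
      using mult_right_mono[OF norm_hump_weight_kernel_coeff_le[of j n], of "norm (w m) ^ n"]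
      by (simp add: norm_mult norm_power)
  next
    show "summable (\<lambda>j. (1/3::real) ^ j)" by (rule summable_geometric_third)
    show "summable (\<lambda>n. sqrt (beta 0) * (norm (w m) ^ n / beta n))"
      by (rule summable_mult[OF sl])
    show "0 \<le> sqrt (beta 0) * (norm (w m) ^ n / beta n)" for n
      using pos[of n] pos[of 0] by simp
  qed simp
  also have "\<dots> = (\<Sum>j. hump_weight j * kernel_val j m)"
    unfolding kernel_val_def mult.assoc
    by (intro suminf_cong suminf_mult
          summable_norm_cancel[OF summable_norm_coeff_power[OF pos lim summable_kernel_coeff w]])
  finally show ?thesis .
qed

lemma norm_hump_at_w_ge: "norm (hump (w m)) \<ge> (1/3) ^ m * K m / 2"
proof -
  define b where "b j = hump_weight j * kernel_val j m" for j
  have b: "norm (b j) \<le> (1/3) ^ j * K m" for j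
    unfolding b_def norm_mult norm_hump_weight by (intro mult_left_mono norm_kernel_val_le) auto
  have sb: "summable (\<lambda>j. norm (b j))"
    by (rule summable_comparison_test'[OF summable_mult2[OF summable_geometric_third, of "K m"]])
       (simp add: b)
  define head where "head = (\<Sum>j<m. b j)"
  have split: "hump (w m) = (\<Sum>i. b (i + Suc m)) + (head + b m)"
    using suminf_split_initial_segment[OF summable_norm_cancel[OF sb], of "Suc m"]
    by (simp add: hump_at_w b_def head_def)
  have "norm (head + b m) - norm (\<Sum>i. b (i + Suc m)) \<le> norm (hump (w m))"
    unfolding split add.commute[of "\<Sum>i. b (i + Suc m)"] by (rule norm_diff_ineq)
  moreover have "norm (head + b m) \<ge> (1/3) ^ m * K m"
  proof -
    have "b m = complex_of_real (hump_sign m * (1/3) ^ m * K m)"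
      by (simp add: b_def hump_weight_def kernel_val_diag)
    moreover have "hump_sign m = (if 0 \<le> Re head then 1 else -1)"
      by (subst hump_sign.simps) (simp add: head_def b_def hump_weight_def)
    ultimately have "\<bar>Re (head + b m)\<bar> \<ge> (1/3) ^ m * K m"
      using K_pos[of m] by auto
    then show ?thesis using abs_Re_le_cmod[of "head + b m"] by linarith
  qed
  moreover have "norm (\<Sum>i. b (i + Suc m)) \<le> (1/3) ^ m * K m / 2"
  proof -
    have tail: "(\<lambda>i. (1/3::real) ^ (i + Suc m) * K m) sums ((1/3) ^ m * K m / 2)"
      using sums_mult[OF geometric_third_sums, of "(1/3) ^ Suc m * K m"]
      by (simp add: power_add mult_ac)
    have "norm (\<Sum>i. b (i + Suc m)) \<le> (\<Sum>i. norm (b (i + Suc m)))"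
      by (rule summable_norm[OF summable_ignore_initial_segment[OF sb]])
    also have "\<dots> \<le> (1/3) ^ m * K m / 2"
      using suminf_le[OF b summable_ignore_initial_segment[OF sb] sums_summable[OF tail]]
            sums_unique[OF tail] by simp
    finally show ?thesis .
  qed
  ultimately show ?thesis by linarith
qed

end

lemma multiplier_in_Hinf:
  assumes pos: "\<And>n. beta n > 0"
    and lim: "liminf (\<lambda>n. ereal (root n (beta n))) \<ge> 1"
    and h: "h \<in> multipliers beta"
  shows "h \<in> Hinf"
proof (rule ccontr)
  assume "h \<notin> Hinf"
  then have unbounded: "\<not> bounded (h ` ball 0 1)"
    using h unfolding Hinf_def multipliers_def by auto
  have "\<exists>z. norm z < 1 \<and> 2 * 3 ^ m * (real m + 1) < norm (h z)" for m
  proof (rule ccontr)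
    assume *: "\<nexists>z. norm z < 1 \<and> 2 * 3 ^ m * (real m + 1) < norm (h z)"
    have "norm (h z) \<le> 2 * 3 ^ m * (real m + 1)" if "norm z < 1" for z
      using spec[OF *[unfolded not_ex], of z] that by (simp add: not_less)
    then have "bounded (h ` ball 0 1)"
      unfolding bounded_iff by (intro exI[of _ "2 * 3 ^ m * (real m + 1)"]) auto
    with unbounded show False ..
  qed
  then obtain w where w: "\<And>m. norm (w m) < 1"
    and hw: "\<And>m. 2 * 3 ^ m * (real m + 1) < norm (h (w m))"
    by metis
  interpret gliding_hump beta w by unfold_locales (use pos lim w in auto)
  have hf: "(\<lambda>z. h z * hump z) \<in> H2 beta"
    using h hump_in_H2 unfolding multipliers_def by auto
  define N where "N = H2_norm beta (\<lambda>z. h z * hump z)"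
  have "real m + 1 < N" for m
  proof -
    have "norm (h (w m)) * ((1/3) ^ m * K m / 2) \<le> norm (h (w m)) * norm (hump (w m))"
      using norm_hump_at_w_ge[of m] by (intro mult_left_mono) auto
    also have "\<dots> \<le> N * K m"
      using H2_point_eval_le[OF pos lim hf w[of m]] by (simp add: N_def norm_mult)
    finally have "norm (h (w m)) * (1/3) ^ m / 2 \<le> N"
      using K_pos[of m] by (simp add: field_simps)
    moreover have "real m + 1 < norm (h (w m)) * (1/3) ^ m / 2"
      using hw[of m] by (simp add: field_simps power_one_over)
    ultimately show ?thesis by linarith
  qed
  from this[of "nat \<lceil>N\<rceil>"] show False by linarith
qed


lemma multipliers_eq_Hinf_if_ess_decreasing:
  fixes beta :: "nat \<Rightarrow> real"
  assumes pos: "\<And>n. beta n > 0"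
    and lim: "liminf (\<lambda>n. ereal (root n (beta n))) \<ge> 1"
    and "ess_decreasing beta"
  shows "multipliers beta = Hinf \<and>
          (\<exists>C>0. \<forall>h\<in>Hinf.
             (\<forall>f\<in>H2 beta. H2_norm beta (\<lambda>z. h z * f z) \<le> C * sup_norm h * H2_norm beta f) \<and>
             sup_norm h \<le> mult_norm beta h \<and> mult_norm beta h \<le> C * sup_norm h)"
proof -
  obtain C where "C \<ge> 1" and dec: "\<And>m n. n \<le> m \<Longrightarrow> beta m \<le> C * beta n"
    using \<open>ess_decreasing beta\<close> unfolding ess_decreasing_def by blast
  have bound: "(\<lambda>z. h z * f z) \<in> H2 beta \<and>
                H2_norm beta (\<lambda>z. h z * f z) \<le> sqrt C * sup_norm h * H2_norm beta f"
    if "h \<in> Hinf" "f \<in> H2 beta" for h f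
    using mult_in_H2_if_ess_decreasing[of beta C h f] H2_norm_mult_le_if_ess_decreasing[of beta C h f]
          pos dec that
    by blast
  have "multipliers beta = Hinf"
    using multiplier_in_Hinf[of beta, OF pos lim] bound by (auto simp: multipliers_def Hinf_def)
  moreover have "sup_norm h \<le> mult_norm beta h \<and> mult_norm beta h \<le> sqrt C * sup_norm h"
    if "h \<in> Hinf" for h
  proof
    show "sup_norm h \<le> mult_norm beta h"
      by (rule sup_norm_le_mult_norm[of beta h "sqrt C * sup_norm h", OF pos lim])
         (use bound[OF that] in auto)
    show "mult_norm beta h \<le> sqrt C * sup_norm h"
      using bound[OF that] sup_norm_nonneg[OF that] \<open>C \<ge> 1\<close> by (intro mult_norm_le) auto
  qed
  ultimately show ?thesis
    using bound \<open>C \<ge> 1\<close> by (intro conjI exI[of _ "sqrt C"]) auto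
qed

theorem mainTheorem16:
  fixes beta :: "nat \<Rightarrow> real"
  assumes pos: "\<And>n. beta n > 0"
    and lim: "liminf (\<lambda>n. ereal (root n (beta n))) \<ge> 1"
  shows "(multipliers beta = Hinf \<and>
          (\<exists>C>0. \<forall>h\<in>Hinf.
             (\<forall>f\<in>H2 beta. H2_norm beta (\<lambda>z. h z * f z) \<le> C * sup_norm h * H2_norm beta f) \<and>
             sup_norm h \<le> mult_norm beta h \<and> mult_norm beta h \<le> C * sup_norm h))
         \<longleftrightarrow> ess_decreasing beta"
  using multipliers_eq_Hinf_if_ess_decreasing[OF pos lim]
    ess_decreasing_if_Hinf_multiplier_bound[of beta, OF pos]
  by (blast intro: less_imp_le)

end
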